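(* Let $\alpha_u,\alpha_f,\alpha_{g_n},\alpha_{h_n}$ ($n\ge1$) be mutually independent Nakagami-$m$ random variables, with all $\alpha_{g_n}$ having parameters $(m_g,\Omega_g)$ and all $\alpha_{h_n}$ having parameters $(m_h,\Omega_h)$, and let $\eta_n=\eta\in(0,1]$. For each $N$ let $\Lambda_N=\alpha_u\big(\alpha_f+\sum_{n=1}^N\eta\alpha_{g_n}\alpha_{h_n}\big)$ and $k_{\Lambda_N}=(\mathbb{E}\{\Lambda_N\})^2/\mathrm{Var}\{\Lambda_N\}$, and let $G_d(N)=k_{\Lambda_N}/2$. Then $$\lim_{N\to\infty}G_d(N)=\frac12\left(m_u\left(\frac{\Gamma(m_u)}{\Gamma(m_u+\frac12)}\right)^2-1\right)^{-1},$$ which depends only on the shape parameter $m_u$ of $\alpha_u$.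
   Context: A Nakagami-$m$ random variable $\alpha_a$ with shape $m_a\ge 1/2$ and scale $\Omega_a>0$ has density $f_{\alpha_a}(x)=\frac{2m_a^{m_a}x^{2m_a-1}}{\Gamma(m_a)\Omega_a^{m_a}}\exp(-m_ax^2/\Omega_a)$, $x\ge0$. $G_d=k_\Lambda/2$ is the diversity order of the Gamma-approximated SNR $\bar\gamma\Lambda^2$. *)

theory Defs
  imports "HOL-Probability.Probability"
begin

definition nakagami_density :: "real \<Rightarrow> real \<Rightarrow> real \<Rightarrow> real" where
  "nakagami_density m \<Omega> x =
     (if x \<ge> 0 then 2 * m powr m * x powr (2 * m - 1) / (Gamma m * \<Omega> powr m)
                    * exp (- m * x\<^sup>2 / \<Omega>) else 0)"

definition nakagami :: "real \<Rightarrow> real \<Rightarrow> 'a measure \<Rightarrow> ('a \<Rightarrow> real) \<Rightarrow> bool" where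
  "nakagami m \<Omega> M X \<longleftrightarrow> distributed M lborel X (\<lambda>x. ennreal (nakagami_density m \<Omega> x))"

text \<open>Index set of the random variables: alpha_u, alpha_f, alpha_{g_n}, alpha_{h_n}.\<close>
datatype rv_idx = U | Fi | Gi nat | Hi nat

definition Lambda :: "(rv_idx \<Rightarrow> 'a \<Rightarrow> real) \<Rightarrow> real \<Rightarrow> nat \<Rightarrow> 'a \<Rightarrow> real" where
  "Lambda X \<eta> N \<omega> = X U \<omega> * (X Fi \<omega> + (\<Sum>n\<in>{1..N}. \<eta> * X (Gi n) \<omega> * X (Hi n) \<omega>))"

definition k_Lambda :: "'a measure \<Rightarrow> (rv_idx \<Rightarrow> 'a \<Rightarrow> real) \<Rightarrow> real \<Rightarrow> nat \<Rightarrow> real" where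
  "k_Lambda M X \<eta> N = (prob_space.expectation M (Lambda X \<eta> N))\<^sup>2
                        / prob_space.variance M (Lambda X \<eta> N)"

definition G_d :: "'a measure \<Rightarrow> (rv_idx \<Rightarrow> 'a \<Rightarrow> real) \<Rightarrow> real \<Rightarrow> nat \<Rightarrow> real" where
  "G_d M X \<eta> N = k_Lambda M X \<eta> N / 2"

end

theory Submission
  imports Defs
begin

text \<open>
  Substituting \<open>t = m x\<^sup>2 / \<Omega>\<close> in the Gamma integral gives the Nakagami moments
  \<open>E \<alpha>\<^sup>k = \<Gamma>(m + k/2) / \<Gamma>(m) (\<Omega>/m)\<^bsup>k/2\<^esup>\<close>, in particular \<open>E \<alpha>\<^sup>2 = \<Omega>\<close>; write \<open>\<mu> = E \<alpha>\<close>.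
  Grouping the independent variables into the independent blocks \<open>\<alpha>\<^sub>u\<close>, \<open>\<alpha>\<^sub>f\<close> and
  \<open>\<eta> \<alpha>\<^sub>g\<^sub>n \<alpha>\<^sub>h\<^sub>n\<close>, the inner sum \<open>S\<^sub>N\<close> of \<open>\<Lambda>\<^sub>N = \<alpha>\<^sub>u S\<^sub>N\<close> has mean \<open>A\<^sub>N\<close> and variance \<open>V\<^sub>N\<close>,
  both affine in \<open>N\<close>, so
  \<open>k\<^sub>\<Lambda> = (\<mu>\<^sub>u A\<^sub>N)\<^sup>2 / (\<Omega>\<^sub>u (A\<^sub>N\<^sup>2 + V\<^sub>N) - (\<mu>\<^sub>u A\<^sub>N)\<^sup>2) \<longrightarrow> \<mu>\<^sub>u\<^sup>2 / (\<Omega>\<^sub>u - \<mu>\<^sub>u\<^sup>2)\<close>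
  because \<open>V\<^sub>N / A\<^sub>N\<^sup>2 \<longrightarrow> 0\<close>. The limit is finite since an absolutely continuous
  \<open>\<alpha>\<^sub>u\<close> has positive variance \<open>\<Omega>\<^sub>u - \<mu>\<^sub>u\<^sup>2\<close>.
\<close>

lemma Gamma_integral_real':
  assumes "a > (0::real)"
  shows "((\<lambda>t. t powr (a - 1) / exp t) has_integral Gamma a) {0<..}"
proof -
  have "((\<lambda>t. t powr (a - 1) / exp t) has_integral Gamma a) {0..}"
    by (rule Gamma_integral_real) fact
  then have "((\<lambda>t. if t \<in> {0<..} then t powr (a - 1) / exp t else 0) has_integral Gamma a) {0..}"
    by (rule has_integral_spike [of "{0}", rotated 2]) auto
  also have "?this = ?thesis"
    by (subst has_integral_restrict) auto
  finally show ?thesis .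
qed

lemma Gamma_integral_real_square_subst:
  fixes a c :: real
  assumes a: "a > 0" and c: "c > 0"
  shows "((\<lambda>x. 2 * c powr a * x powr (2 * a - 1) / exp (c * x\<^sup>2)) has_integral Gamma a) {0<..}"
proof -
  let ?f = "\<lambda>t::real. t powr (a - 1) / exp t"
  let ?g = "\<lambda>x::real. c * x\<^sup>2"
  let ?F = "\<lambda>x. \<bar>2 * c * x\<bar> * ?f (?g x)"
  have f: "(?f has_integral Gamma a) {0<..}"
    by (rule Gamma_integral_real'[OF a])
  have "?g ` {0<..} = {0<..}"
  proof (intro equalityI subsetI)
    fix y :: real assume "y \<in> {0<..}"
    then have "y = ?g (sqrt (y / c))" "sqrt (y / c) \<in> {0<..}"
      using c by (simp_all add: power2_eq_square)
    then show "y \<in> ?g ` {0<..}" by blast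
  qed (use c in auto)
  moreover have "inj_on ?g {0<..}"
    using c by (auto simp: inj_on_def power2_eq_iff_nonneg)
  moreover have "(?g has_field_derivative 2 * c * x) (at x within {0<..})" for x
    by (auto intro!: derivative_eq_intros)
  moreover have "?f absolutely_integrable_on {0<..}"
    using f by (intro nonnegative_absolutely_integrable_1) auto
  ultimately have "?F absolutely_integrable_on {0<..} \<and> integral {0<..} ?F = Gamma a"
    using f by (subst has_absolute_integral_change_of_variables_1') (auto simp: integral_unique)
  then have "(?F has_integral Gamma a) {0<..}"
    unfolding has_integral_integrable_integral using set_lebesgue_integral_eq_integral(1) by blast
  moreover have "?F x = 2 * c powr a * x powr (2 * a - 1) / exp (c * x\<^sup>2)"
    if "x > 0" for x
  proof -
    have "(c * x\<^sup>2) powr (a - 1) = c powr (a - 1) * x powr (2 * a - 2)"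
      using c that by (simp add: powr_mult powr_powr algebra_simps flip: powr_numeral)
    then have "\<bar>2 * c * x\<bar> * ?f (?g x) = 2 * (c * c powr (a - 1)) * (x * x powr (2 * a - 2)) / exp (c * x\<^sup>2)"
      using c that by (simp add: mult_ac)
    also have "\<dots> = 2 * c powr a * x powr (2 * a - 1) / exp (c * x\<^sup>2)"
      using c that by (simp add: powr_mult_base)
    finally show ?thesis .
  qed
  ultimately show ?thesis
    by (rule has_integral_eq[rotated]) simp
qed

lemma nakagami_density_nonneg: "0 < m \<Longrightarrow> 0 < \<Omega> \<Longrightarrow> 0 \<le> nakagami_density m \<Omega> x"
  unfolding nakagami_density_def by (auto intro!: divide_nonneg_pos Gamma_real_pos)

lemma nakagami_density_nonpos_eq_0: "x \<le> 0 \<Longrightarrow> nakagami_density m \<Omega> x = 0"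
  unfolding nakagami_density_def by auto

lemma nakagami_density_measurable [measurable]: "nakagami_density m \<Omega> \<in> borel_measurable borel"
  unfolding nakagami_density_def by measurable

lemma nakagami_density_pos_eq:
  assumes "0 < m" "0 < \<Omega>" "0 < x"
  shows "nakagami_density m \<Omega> x = 2 * (m / \<Omega>) powr m * x powr (2 * m - 1) / exp (m / \<Omega> * x\<^sup>2) / Gamma m"
  using assms by (simp add: nakagami_density_def powr_divide exp_minus field_simps)

lemma has_bochner_integral_nakagami_moment:
  fixes k :: nat
  assumes m: "0 < m" and \<Omega>: "0 < \<Omega>"
  shows "has_bochner_integral lborel (\<lambda>x. nakagami_density m \<Omega> x * x ^ k)
           (Gamma (m + k / 2) / Gamma m * (\<Omega> / m) powr (k / 2))"
proof -
  define c where "c = m / \<Omega>"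
  define a where "a = m + k / 2"
  have c: "0 < c" and a: "0 < a"
    using m \<Omega> by (simp_all add: c_def a_def)
  have c_pow: "c powr (- (k / 2)) = (\<Omega> / m) powr (k / 2)"
    using m \<Omega> by (simp add: c_def powr_minus_divide powr_divide)
  let ?C = "c powr (- (k / 2)) / Gamma m"
  have "((\<lambda>x. ?C * (2 * c powr a * x powr (2 * a - 1) / exp (c * x\<^sup>2))) has_integral ?C * Gamma a) {0<..}"
    by (intro has_integral_mult_right Gamma_integral_real_square_subst a c)
  moreover have "?C * (2 * c powr a * x powr (2 * a - 1) / exp (c * x\<^sup>2)) = nakagami_density m \<Omega> x * x ^ k"
    if x: "x \<in> {0<..}" for x
  proof -
    have "c powr m = c powr (- (k / 2)) * c powr a"
      by (simp add: a_def flip: powr_add)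
    moreover have "x powr (2 * m - 1) * x ^ k = x powr (2 * a - 1)"
    proof -
      have "x powr (2 * m - 1) * x powr k = x powr (2 * a - 1)"
        unfolding a_def powr_add[symmetric] by (simp add: algebra_simps)
      then show ?thesis
        using x by (simp add: powr_realpow)
    qed
    ultimately show ?thesis
      using x by (simp add: nakagami_density_pos_eq[OF m \<Omega>, folded c_def] field_simps)
  qed
  ultimately have "((\<lambda>x. nakagami_density m \<Omega> x * x ^ k) has_integral ?C * Gamma a) {0<..}"
    by (rule has_integral_eq[rotated]) simp
  then have "((\<lambda>x. nakagami_density m \<Omega> x * x ^ k) has_integral ?C * Gamma a) UNIV"
    by (rule has_integral_on_superset) (auto simp: nakagami_density_nonpos_eq_0)
  moreover have "0 \<le> nakagami_density m \<Omega> x * x ^ k" for x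
    using nakagami_density_nonneg[OF m \<Omega>] by (cases "0 < x") (auto simp: nakagami_density_nonpos_eq_0)
  moreover have "0 \<le> ?C * Gamma a"
    using a m by (simp add: Gamma_real_pos less_imp_le)
  ultimately have "has_bochner_integral lborel (\<lambda>x. nakagami_density m \<Omega> x * x ^ k) (?C * Gamma a)"
    by (intro has_bochner_integral_nn_integral)
      (simp_all add: nn_integral_has_integral_lebesgue'[where \<Omega> = UNIV, simplified])
  then show ?thesis
    by (simp add: c_pow a_def mult.commute)
qed

lemma nakagami_moment:
  fixes X :: "'a \<Rightarrow> real" and k :: nat
  assumes X: "nakagami m \<Omega> M X" and m: "0 < m" and \<Omega>: "0 < \<Omega>"
  shows "integrable M (\<lambda>\<omega>. X \<omega> ^ k)"
    and "(\<integral>\<omega>. X \<omega> ^ k \<partial>M) = Gamma (m + k / 2) / Gamma m * (\<Omega> / m) powr (k / 2)"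
proof -
  have D: "distributed M lborel X (\<lambda>x. ennreal (nakagami_density m \<Omega> x))"
    using X by (simp add: nakagami_def)
  note I = has_bochner_integral_nakagami_moment[OF m \<Omega>, of k]
  show "integrable M (\<lambda>\<omega>. X \<omega> ^ k)"
    using distributed_integrable[OF D, of "\<lambda>x. x ^ k"] I nakagami_density_nonneg[OF m \<Omega>]
    by (simp add: has_bochner_integral_iff)
  show "(\<integral>\<omega>. X \<omega> ^ k \<partial>M) = Gamma (m + k / 2) / Gamma m * (\<Omega> / m) powr (k / 2)"
    using distributed_integral[OF D, of "\<lambda>x. x ^ k"] I nakagami_density_nonneg[OF m \<Omega>]
    by (simp add: has_bochner_integral_iff)
qed

definition has_moments :: "'a measure \<Rightarrow> ('a \<Rightarrow> real) \<Rightarrow> real \<Rightarrow> real \<Rightarrow> bool" where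
  "has_moments M X \<mu> s \<longleftrightarrow> integrable M X \<and> integrable M (\<lambda>\<omega>. (X \<omega>)\<^sup>2) \<and>
     (\<integral>\<omega>. X \<omega> \<partial>M) = \<mu> \<and> (\<integral>\<omega>. (X \<omega>)\<^sup>2 \<partial>M) = s"

lemma has_moments_scale:
  "has_moments M X \<mu> s \<Longrightarrow> has_moments M (\<lambda>\<omega>. c * X \<omega>) (c * \<mu>) (c\<^sup>2 * s)"
  by (simp add: has_moments_def power_mult_distrib)

lemma (in prob_space) variance_eq_has_moments:
  "has_moments M X \<mu> s \<Longrightarrow> variance X = s - \<mu>\<^sup>2"
  unfolding has_moments_def using variance_eq[of X] by simp

lemma (in prob_space) has_moments_mult_indep:
  assumes "indep_var borel X borel Y" "has_moments M X \<mu> s" "has_moments M Y \<nu> t"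
  shows "has_moments M (\<lambda>\<omega>. X \<omega> * Y \<omega>) (\<mu> * \<nu>) (s * t)"
proof -
  have indep_sq: "indep_var borel (\<lambda>\<omega>. (X \<omega>)\<^sup>2) borel (\<lambda>\<omega>. (Y \<omega>)\<^sup>2)"
    using indep_var_compose[OF assms(1), of "\<lambda>x. x\<^sup>2" borel "\<lambda>x. x\<^sup>2" borel] by (simp add: comp_def)
  show ?thesis
    using assms(2,3) indep_var_integrable[OF assms(1)] indep_var_lebesgue_integral[OF assms(1)]
      indep_var_integrable[OF indep_sq] indep_var_lebesgue_integral[OF indep_sq]
    by (simp add: has_moments_def power_mult_distrib)
qed

lemma (in prob_space) has_moments_sum_indep:
  fixes X :: "'i \<Rightarrow> 'a \<Rightarrow> real"
  assumes indep: "indep_vars (\<lambda>_. borel) X J" and "finite J"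
    and moments: "\<And>j. j \<in> J \<Longrightarrow> has_moments M (X j) (\<mu> j) (s j)"
  shows "has_moments M (\<lambda>\<omega>. \<Sum>j\<in>J. X j \<omega>) (\<Sum>j\<in>J. \<mu> j) ((\<Sum>j\<in>J. \<mu> j)\<^sup>2 + (\<Sum>j\<in>J. s j - (\<mu> j)\<^sup>2))"
  using \<open>finite J\<close> indep moments
proof (induction J rule: finite_induct)
  case empty
  then show ?case
    by (simp add: has_moments_def)
next
  case (insert i J)
  let ?S = "\<lambda>\<omega>. \<Sum>j\<in>J. X j \<omega>"
  have IH: "has_moments M ?S (\<Sum>j\<in>J. \<mu> j) ((\<Sum>j\<in>J. \<mu> j)\<^sup>2 + (\<Sum>j\<in>J. s j - (\<mu> j)\<^sup>2))"
    using insert by (auto intro: indep_vars_subset)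
  have Xi: "has_moments M (X i) (\<mu> i) (s i)"
    using insert by simp
  have "has_moments M (\<lambda>\<omega>. X i \<omega> * ?S \<omega>) (\<mu> i * (\<Sum>j\<in>J. \<mu> j)) (s i * ((\<Sum>j\<in>J. \<mu> j)\<^sup>2 + (\<Sum>j\<in>J. s j - (\<mu> j)\<^sup>2)))"
    using insert IH Xi by (intro has_moments_mult_indep indep_vars_sum) auto
  then have "integrable M (\<lambda>\<omega>. X i \<omega> * ?S \<omega>)" "(\<integral>\<omega>. X i \<omega> * ?S \<omega> \<partial>M) = \<mu> i * (\<Sum>j\<in>J. \<mu> j)"
    by (simp_all add: has_moments_def)
  moreover have "(\<Sum>j\<in>insert i J. X j \<omega>)\<^sup>2 = (X i \<omega>)\<^sup>2 + 2 * (X i \<omega> * ?S \<omega>) + (?S \<omega>)\<^sup>2" for \<omega>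
    using insert by (simp add: power2_sum)
  ultimately show ?case
    using insert IH Xi by (simp add: has_moments_def power2_sum algebra_simps)
qed

lemma (in prob_space) variance_pos_if_distributed:
  fixes X :: "'a \<Rightarrow> real"
  assumes D: "distributed M lborel X f" and X: "integrable M X" "integrable M (\<lambda>\<omega>. (X \<omega>)\<^sup>2)"
  shows "0 < variance X"
proof (rule ccontr)
  have [measurable]: "X \<in> borel_measurable M"
    using distributed_measurable[OF D] by simp
  assume "\<not> 0 < variance X"
  then have "variance X = 0"
    using variance_positive[of X] by simp
  moreover have "integrable M (\<lambda>\<omega>. (X \<omega> - expectation X)\<^sup>2)"
    using X by (simp add: power2_diff)
  ultimately have "AE \<omega> in M. X \<omega> = expectation X"
    by (simp add: integral_nonneg_eq_0_iff_AE)
  moreover have "emeasure M (X -` {expectation X} \<inter> space M) = 0"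
    using distributed_emeasure[OF D, of "{expectation X}"]
    by (simp add: nn_integral_null_set countable_imp_null_set_lborel)
  then have "AE \<omega> in M. X \<omega> \<noteq> expectation X"
    by (intro AE_I'[of "X -` {expectation X} \<inter> space M"]) (auto intro!: null_setsI)
  ultimately have "AE \<omega> in M. False"
    by eventually_elim simp
  then show False
    by simp
qed

definition nakagami_mean :: "real \<Rightarrow> real \<Rightarrow> real" where
  "nakagami_mean m \<Omega> = Gamma (m + 1/2) / Gamma m * sqrt (\<Omega> / m)"

lemma nakagami_mean_pos: "0 < m \<Longrightarrow> 0 < \<Omega> \<Longrightarrow> 0 < nakagami_mean m \<Omega>"
  unfolding nakagami_mean_def by (simp add: Gamma_real_pos)

lemma nakagami_has_moments:
  assumes X: "nakagami m \<Omega> M X" and m: "0 < m" and \<Omega>: "0 < \<Omega>"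
  shows "has_moments M X (nakagami_mean m \<Omega>) \<Omega>"
proof -
  have "Gamma (m + 1) = m * Gamma m"
    using m by (intro Gamma_plus1) (auto elim!: nonpos_Ints_cases)
  then show ?thesis
    using nakagami_moment[OF X m \<Omega>, of 1] nakagami_moment[OF X m \<Omega>, of 2] m \<Omega> Gamma_real_pos[OF m]
    by (simp add: has_moments_def nakagami_mean_def powr_half_sqrt)
qed

lemma nakagami_mean_sq_less:
  assumes "prob_space M" and X: "nakagami m \<Omega> M X" and m: "0 < m" and \<Omega>: "0 < \<Omega>"
  shows "(nakagami_mean m \<Omega>)\<^sup>2 < \<Omega>"
proof -
  interpret prob_space M by fact
  note moments = nakagami_has_moments[OF X m \<Omega>]
  have "0 < variance X"
    using X moments by (intro variance_pos_if_distributed) (auto simp: nakagami_def has_moments_def)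
  then show ?thesis
    using variance_eq_has_moments[OF moments] by simp
qed

lemma nakagami_mean_sq_ratio:
  assumes m: "0 < m" and \<Omega>: "0 < \<Omega>"
  shows "(nakagami_mean m \<Omega>)\<^sup>2 / (\<Omega> - (nakagami_mean m \<Omega>)\<^sup>2) =
           inverse (m * (Gamma m / Gamma (m + 1/2))\<^sup>2 - 1)"
proof -
  define q where "q = (Gamma (m + 1/2) / Gamma m)\<^sup>2"
  have "0 < Gamma m" "0 < Gamma (m + 1/2)"
    using m by (simp_all add: Gamma_real_pos)
  then have "0 < q"
    by (simp add: q_def)
  have mean_sq: "(nakagami_mean m \<Omega>)\<^sup>2 = q * \<Omega> / m"
    using m \<Omega> by (simp add: nakagami_mean_def q_def power_mult_distrib power_divide)
  have "(nakagami_mean m \<Omega>)\<^sup>2 / (\<Omega> - (nakagami_mean m \<Omega>)\<^sup>2) = q / (m - q)"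
  proof (cases "m = q")
    case True
    then have "\<Omega> - (nakagami_mean m \<Omega>)\<^sup>2 = 0"
      using m mean_sq by (simp flip: True)
    with True show ?thesis
      by simp
  next
    case False
    then show ?thesis
      using m \<Omega> by (simp add: mean_sq field_simps)
  qed
  also have "\<dots> = inverse (m / q - 1)"
  proof -
    have "m / q - 1 = (m - q) / q"
      using \<open>0 < q\<close> by (simp add: field_simps)
    then show ?thesis
      by simp
  qed
  also have "m / q = m * (Gamma m / Gamma (m + 1/2))\<^sup>2"
    by (simp add: q_def power_divide)
  finally show ?thesis .
qed

lemma (in prob_space) indep_vars_imp_indep_var:
  assumes "indep_vars M' X I" "i \<in> I" "j \<in> I" "i \<noteq> j"
  shows "indep_var (M' i) (X i) (M' j) (X j)"
proof -
  have "indep_var (M' i) ((\<lambda>f. f i) \<circ> (\<lambda>\<omega>. restrict (\<lambda>i. X i \<omega>) {i}))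
      (M' j) ((\<lambda>f. f j) \<circ> (\<lambda>\<omega>. restrict (\<lambda>i. X i \<omega>) {j}))"
    using assms by (intro indep_var_compose[OF indep_var_restrict[OF assms(1)]]) auto
  then show ?thesis
    by (simp add: comp_def)
qed

lemma (in prob_space) indep_vars_blocks:
  fixes X :: "'i \<Rightarrow> 'a \<Rightarrow> 'b" and Y :: "'j \<Rightarrow> ('i \<Rightarrow> 'b) \<Rightarrow> 'c"
  assumes "indep_vars (\<lambda>_. N) X I" "disjoint_family_on K J" "\<And>j. j \<in> J \<Longrightarrow> K j \<subseteq> I"
    and "\<And>j. j \<in> J \<Longrightarrow> Y j \<in> measurable (PiM (K j) (\<lambda>_. N)) N'"
    and "\<And>j f. j \<in> J \<Longrightarrow> Y j (restrict f (K j)) = Y j f"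
  shows "indep_vars (\<lambda>_. N') (\<lambda>j \<omega>. Y j (\<lambda>i. X i \<omega>)) J"
proof -
  have "indep_vars (\<lambda>_. N') (\<lambda>j \<omega>. Y j (restrict (\<lambda>i. X i \<omega>) (K j))) J"
    using assms by (intro indep_vars_compose2[OF indep_vars_restrict]) auto
  then show ?thesis
    using assms(5) by (simp cong: indep_vars_cong)
qed

definition Lambda_block :: "nat option \<Rightarrow> rv_idx set" where
  "Lambda_block j = (case j of None \<Rightarrow> {U} | Some n \<Rightarrow> if n = 0 then {Fi} else {Gi n, Hi n})"

definition Lambda_term :: "real \<Rightarrow> nat option \<Rightarrow> (rv_idx \<Rightarrow> real) \<Rightarrow> real" where
  "Lambda_term \<eta> j x = (case j of None \<Rightarrow> x U | Some n \<Rightarrow> if n = 0 then x Fi else \<eta> * x (Gi n) * x (Hi n))"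

lemma Lambda_eq_Lambda_term:
  "Lambda X \<eta> N \<omega> =
     Lambda_term \<eta> None (\<lambda>i. X i \<omega>) * (\<Sum>n\<in>{0..N}. Lambda_term \<eta> (Some n) (\<lambda>i. X i \<omega>))"
proof -
  have "(\<Sum>n\<in>{1..N}. Lambda_term \<eta> (Some n) (\<lambda>i. X i \<omega>)) = (\<Sum>n\<in>{1..N}. \<eta> * X (Gi n) \<omega> * X (Hi n) \<omega>)"
    by (intro sum.cong) (auto simp: Lambda_term_def)
  then show ?thesis
    by (simp add: Lambda_def sum.atLeast_Suc_atMost) (simp add: Lambda_term_def)
qed

lemma (in prob_space) indep_vars_Lambda_term:
  assumes "indep_vars (\<lambda>_. borel) X UNIV"
  shows "indep_vars (\<lambda>_. borel) (\<lambda>j \<omega>. Lambda_term \<eta> j (\<lambda>i. X i \<omega>)) UNIV"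
proof (rule indep_vars_blocks[OF assms, where K = Lambda_block])
  show "disjoint_family_on Lambda_block UNIV"
    by (auto simp: disjoint_family_on_def Lambda_block_def split: option.splits)
  show "Lambda_term \<eta> j \<in> borel_measurable (PiM (Lambda_block j) (\<lambda>_. borel))" for j
    by (cases j) (auto simp: Lambda_term_def[abs_def] Lambda_block_def)
  show "Lambda_term \<eta> j (restrict f (Lambda_block j)) = Lambda_term \<eta> j f" for j f
    by (auto simp: Lambda_term_def Lambda_block_def split: option.splits)
qed simp

lemma k_Lambda_eq_moments:
  fixes X :: "rv_idx \<Rightarrow> 'a \<Rightarrow> real" and \<eta> :: real and N :: nat
  assumes "prob_space M" and indep: "prob_space.indep_vars M (\<lambda>_. borel) X UNIV"
    and U: "has_moments M (X U) \<mu>\<^sub>u s\<^sub>u" and F: "has_moments M (X Fi) \<mu>\<^sub>f s\<^sub>f"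
    and G: "\<forall>n\<ge>1. has_moments M (X (Gi n)) \<mu>\<^sub>g s\<^sub>g"
    and H: "\<forall>n\<ge>1. has_moments M (X (Hi n)) \<mu>\<^sub>h s\<^sub>h"
  defines "A \<equiv> \<mu>\<^sub>f + N * (\<eta> * \<mu>\<^sub>g * \<mu>\<^sub>h)"
    and "V \<equiv> s\<^sub>f - \<mu>\<^sub>f\<^sup>2 + N * (\<eta>\<^sup>2 * s\<^sub>g * s\<^sub>h - (\<eta> * \<mu>\<^sub>g * \<mu>\<^sub>h)\<^sup>2)"
  shows "k_Lambda M X \<eta> N = (\<mu>\<^sub>u * A)\<^sup>2 / (s\<^sub>u * (A\<^sup>2 + V) - (\<mu>\<^sub>u * A)\<^sup>2)"
proof -
  interpret prob_space M by fact
  define T where "T j \<omega> = Lambda_term \<eta> j (\<lambda>i. X i \<omega>)" for j \<omega>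
  define S where "S \<omega> = (\<Sum>j\<in>Some ` {0..N}. T j \<omega>)" for \<omega>
  have indep_T: "indep_vars (\<lambda>_. borel) T UNIV"
    unfolding T_def by (rule indep_vars_Lambda_term[OF indep])
  define \<mu> where "\<mu> j = (if j = Some (0::nat) then \<mu>\<^sub>f else \<eta> * \<mu>\<^sub>g * \<mu>\<^sub>h)" for j
  define s where "s j = (if j = Some (0::nat) then s\<^sub>f else \<eta>\<^sup>2 * s\<^sub>g * s\<^sub>h)" for j
  have T_moments: "has_moments M (T (Some n)) (\<mu> (Some n)) (s (Some n))" for n
  proof (cases "n = 0")
    case False
    then have "has_moments M (\<lambda>\<omega>. \<eta> * (X (Gi n) \<omega> * X (Hi n) \<omega>)) (\<eta> * (\<mu>\<^sub>g * \<mu>\<^sub>h)) (\<eta>\<^sup>2 * (s\<^sub>g * s\<^sub>h))"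
      using G H by (intro has_moments_scale has_moments_mult_indep indep_vars_imp_indep_var[OF indep]) auto
    with False show ?thesis
      by (simp add: T_def[abs_def] Lambda_term_def \<mu>_def s_def mult_ac)
  qed (simp add: T_def[abs_def] Lambda_term_def \<mu>_def s_def F)
  have "has_moments M S (\<Sum>j\<in>Some ` {0..N}. \<mu> j)
      ((\<Sum>j\<in>Some ` {0..N}. \<mu> j)\<^sup>2 + (\<Sum>j\<in>Some ` {0..N}. s j - (\<mu> j)\<^sup>2))"
    unfolding S_def using T_moments by (intro has_moments_sum_indep indep_vars_subset[OF indep_T]) auto
  moreover have "(\<Sum>j\<in>Some ` {0..N}. \<mu> j) = A" "(\<Sum>j\<in>Some ` {0..N}. s j - (\<mu> j)\<^sup>2) = V"
    by (simp_all add: \<mu>_def s_def A_def V_def sum.reindex sum.atLeast_Suc_atMost)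
  ultimately have "has_moments M S A (A\<^sup>2 + V)"
    by simp
  moreover have "indep_var borel (T None) borel S"
    unfolding S_def by (intro indep_vars_sum indep_vars_subset[OF indep_T]) auto
  moreover have "T None = X U"
    by (simp add: fun_eq_iff T_def Lambda_term_def)
  ultimately have "has_moments M (\<lambda>\<omega>. T None \<omega> * S \<omega>) (\<mu>\<^sub>u * A) (s\<^sub>u * (A\<^sup>2 + V))"
    using U by (simp add: has_moments_mult_indep)
  moreover have "Lambda X \<eta> N = (\<lambda>\<omega>. T None \<omega> * S \<omega>)"
    by (simp add: fun_eq_iff Lambda_eq_Lambda_term T_def S_def sum.reindex)
  ultimately have Lambda_moments: "has_moments M (Lambda X \<eta> N) (\<mu>\<^sub>u * A) (s\<^sub>u * (A\<^sup>2 + V))"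
    by simp
  show ?thesis
    unfolding k_Lambda_def variance_eq_has_moments[OF Lambda_moments]
    using Lambda_moments by (simp add: has_moments_def)
qed

lemma tendsto_linear_div_square_linear:
  fixes a c v d :: real
  assumes a: "0 < a"
  shows "(\<lambda>N. (v + N * d) / (c + N * a)\<^sup>2) \<longlonglongrightarrow> 0"
proof -
  have "(\<lambda>N. inverse (real N) * ((v / N + d) / (c / N + a)\<^sup>2)) \<longlonglongrightarrow> 0 * ((0 + d) / (0 + a)\<^sup>2)"
    using a by (intro tendsto_intros lim_inverse_n lim_const_over_n) auto
  moreover have "inverse (real N) * ((v / N + d) / (c / N + a)\<^sup>2) = (v + N * d) / (c + N * a)\<^sup>2"
    if "1 \<le> N" for N
  proof -
    have alg: "inverse n * ((x / n) / (y / n)\<^sup>2) = x / y\<^sup>2" if "n \<noteq> 0" for n x y :: real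
      using that by (cases "y = 0") (simp_all add: field_simps power2_eq_square)
    have "v / N + d = (v + N * d) / N" "c / N + a = (c + N * a) / N"
      using that by (simp_all add: field_simps)
    then show ?thesis
      using that alg[of N] by simp
  qed
  ultimately show ?thesis
    by (auto intro: Lim_transform_eventually eventually_sequentiallyI)
qed

lemma tendsto_square_ratio_linear:
  fixes \<mu> s a c v d :: real
  assumes a: "0 < a" and s: "\<mu>\<^sup>2 \<noteq> s"
  shows "(\<lambda>N. (\<mu> * (c + N * a))\<^sup>2 / (s * ((c + N * a)\<^sup>2 + (v + N * d)) - (\<mu> * (c + N * a))\<^sup>2))
           \<longlonglongrightarrow> \<mu>\<^sup>2 / (s - \<mu>\<^sup>2)"
proof -
  define r where "r N = (v + N * d) / (c + N * a)\<^sup>2" for N :: nat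
  have "(\<lambda>N. \<mu>\<^sup>2 / (s * (1 + r N) - \<mu>\<^sup>2)) \<longlonglongrightarrow> \<mu>\<^sup>2 / (s * (1 + 0) - \<mu>\<^sup>2)"
    unfolding r_def using a s by (intro tendsto_intros tendsto_linear_div_square_linear) auto
  moreover obtain N\<^sub>0 :: nat where "\<bar>c\<bar> / a < N\<^sub>0"
    using reals_Archimedean2 by blast
  have "\<mu>\<^sup>2 / (s * (1 + r N) - \<mu>\<^sup>2) =
      (\<mu> * (c + N * a))\<^sup>2 / (s * ((c + N * a)\<^sup>2 + (v + N * d)) - (\<mu> * (c + N * a))\<^sup>2)"
    if "N\<^sub>0 \<le> N" for N
  proof -
    have "\<bar>c\<bar> < N\<^sub>0 * a"
      using \<open>\<bar>c\<bar> / a < N\<^sub>0\<close> a by (simp add: divide_less_eq)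
    also have "\<dots> \<le> N * a"
      using that a by (intro mult_right_mono) simp_all
    finally have "\<bar>c\<bar> < N * a" .
    then have "c + N * a \<noteq> 0"
      by linarith
    moreover have "\<mu>\<^sup>2 / (s * (1 + w / A\<^sup>2) - \<mu>\<^sup>2) = (\<mu> * A)\<^sup>2 / (s * (A\<^sup>2 + w) - (\<mu> * A)\<^sup>2)"
      if "A \<noteq> 0" for A w
    proof -
      have "s * (1 + w / A\<^sup>2) - \<mu>\<^sup>2 = (s * (A\<^sup>2 + w) - (\<mu> * A)\<^sup>2) / A\<^sup>2"
        using that by (simp add: field_simps power_mult_distrib)
      then show ?thesis
        using that by (simp add: power_mult_distrib)
    qed
    ultimately show ?thesis
      unfolding r_def by blast
  qed
  ultimately show ?thesis
    by (auto intro: Lim_transform_eventually eventually_sequentiallyI)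
qed

theorem mainTheorem8:
  fixes M :: "'a measure" and X :: "rv_idx \<Rightarrow> 'a \<Rightarrow> real"
    and m_u \<Omega>_u m_f \<Omega>_f m_g \<Omega>_g m_h \<Omega>_h \<eta> :: real
  assumes "prob_space M"
    and "prob_space.indep_vars M (\<lambda>_. (borel :: real measure)) X UNIV"
    and "m_u \<ge> 1/2" "\<Omega>_u > 0" "m_f \<ge> 1/2" "\<Omega>_f > 0"
    and "m_g \<ge> 1/2" "\<Omega>_g > 0" "m_h \<ge> 1/2" "\<Omega>_h > 0"
    and "nakagami m_u \<Omega>_u M (X U)"
    and "nakagami m_f \<Omega>_f M (X Fi)"
    and "\<And>n. n \<ge> 1 \<Longrightarrow> nakagami m_g \<Omega>_g M (X (Gi n))"
    and "\<And>n. n \<ge> 1 \<Longrightarrow> nakagami m_h \<Omega>_h M (X (Hi n))"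
    and "0 < \<eta>" "\<eta> \<le> 1"
  shows "(\<lambda>N. G_d M X \<eta> N) \<longlonglongrightarrow>
           (1/2) * inverse (m_u * (Gamma m_u / Gamma (m_u + 1/2))\<^sup>2 - 1)"
proof -
  have pos: "0 < m_u" "0 < m_f" "0 < m_g" "0 < m_h"
    using assms(3,5,7,9) by auto
  have moments: "has_moments M (X U) (nakagami_mean m_u \<Omega>_u) \<Omega>_u"
      "has_moments M (X Fi) (nakagami_mean m_f \<Omega>_f) \<Omega>_f"
      "\<forall>n\<ge>1. has_moments M (X (Gi n)) (nakagami_mean m_g \<Omega>_g) \<Omega>_g"
      "\<forall>n\<ge>1. has_moments M (X (Hi n)) (nakagami_mean m_h \<Omega>_h) \<Omega>_h"
    using assms pos by (auto intro!: nakagami_has_moments)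
  have "(nakagami_mean m_u \<Omega>_u)\<^sup>2 \<noteq> \<Omega>_u"
    using nakagami_mean_sq_less[OF assms(1,11) pos(1) assms(4)] by simp
  then have "(\<lambda>N. k_Lambda M X \<eta> N) \<longlonglongrightarrow> (nakagami_mean m_u \<Omega>_u)\<^sup>2 / (\<Omega>_u - (nakagami_mean m_u \<Omega>_u)\<^sup>2)"
    unfolding k_Lambda_eq_moments[OF assms(1,2) moments, abs_def]
    using assms pos by (intro tendsto_square_ratio_linear) (simp_all add: nakagami_mean_pos)
  then show ?thesis
    using tendsto_divide[OF _ tendsto_const[of "2::real"]] nakagami_mean_sq_ratio[OF pos(1) assms(4)]
    unfolding G_d_def by simp
qed

end
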